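(* Let $\gamma:[0,1]\to\mathbb{R}^2$ be a $C^1$ curve of constant speed $c>0$ with $\gamma(0)\neq\gamma(1)$, whose turning angle function $\theta$ satisfies $\theta(1)-\theta(0)=2\pi m$ with $0\neq m\in\mathbb{Z}$. Let $\sigma\in S_k$ and $z_h\in Z_k$. Then $\gamma$ is $(k,1)$-rearrangeable with respect to $\sigma$ if and only if $\gamma$ is $(k,1)$-rearrangeable with respect to the composition $\sigma\cdot z_h$ (defined by $(\sigma\cdot z_h)(i)=\sigma(z_h(i))$).
   Context: A turning angle function is a continuous $\theta$ with $\gamma'(s)=c(\cos\theta(s),\sin\theta(s))$. Concatenation $\alpha*\beta$ of two $C^1$ planar curves of the same constant speed ($\alpha$ on $[a_1,b_1]$, $\beta$ on $[a_2,b_2]$) is the curve equal to $\alpha(s+a_1)$ for $s\le b_1-a_1$ and to $T(\beta(s-(b_1-a_1)+a_2))$ afterwards, where $T$ is the orientation-preserving rigid motion sending $\beta(a_2)$ to $\alpha(b_1)$ and the unit tangent of $\beta$ at $a_2$ to that of $\alpha$ at $b_1$; it is associative. Let $D_k=\{(c_1,\dots,c_{k-1})\in[0,1]^{k-1}: 0\le c_1\le\dots\le c_{k-1}\le 1\}$; set $c_0=0$, $c_k=1$. For $C\in D_k$ let $\gamma_i$ be the restriction of $\gamma$ to $[c_{i-1},c_i]$ (degenerate arcs are points carrying the tangent direction of $\gamma$). For $\sigma\in S_k$, $r_{\sigma,C}:=\gamma_{\sigma(1)}*\dots*\gamma_{\sigma(k)}$ over $[0,1]$. $\gamma$ is $(k,1)$-rearrangeable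 with respect to $\sigma$ if there exist $C\in D_k$ such that $r_{\sigma,C}$ is a closed $C^1$ curve (end point equals start point and the tangents there agree). $Z_k=\{z_0,\dots,z_{k-1}\}$ with $z_h(i)=i+h$ if $i\le k-h$ and $z_h(i)=i+h-k$ if $i>k-h$. *)

theory Defs
  imports "HOL-Analysis.Analysis" "HOL-Combinatorics.Permutations"
begin

definition velocity :: "(real \<Rightarrow> complex) \<Rightarrow> real \<Rightarrow> complex" where
  "velocity \<gamma> t = vector_derivative \<gamma> (at t within {0..1})"

definition C1_curve :: "(real \<Rightarrow> complex) \<Rightarrow> bool" where
  "C1_curve \<gamma> \<longleftrightarrow> (\<forall>t\<in>{0..1}. \<gamma> differentiable (at t within {0..1})) \<and>
     continuous_on {0..1} (velocity \<gamma>)"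

text \<open>An arc is a quadruple (p, d, a, b): the position map p on [a,b] together with
its unit tangent direction d (so that degenerate arcs a = b still carry a tangent).\<close>

type_synonym arc = "(real \<Rightarrow> complex) \<times> (real \<Rightarrow> complex) \<times> real \<times> real"

text \<open>Concatenation alpha * beta: the result lives on [0, (b1-a1)+(b2-a2)];
T z = alpha(b1) + u (z - beta(a2)) with u the rotation taking the unit tangent of beta
at a2 to that of alpha at b1.\<close>

definition concat_arc :: "arc \<Rightarrow> arc \<Rightarrow> arc" where
  "concat_arc A B = (case A of (p1, d1, a1, b1) \<Rightarrow> case B of (p2, d2, a2, b2) \<Rightarrow>
     (let u = d1 b1 / d2 a2; T = (\<lambda>z. p1 b1 + u * (z - p2 a2)); L1 = b1 - a1 in
      (\<lambda>s. if s \<le> L1 then p1 (s + a1) else T (p2 (s - L1 + a2)),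
       \<lambda>s. if s \<le> L1 then d1 (s + a1) else u * d2 (s - L1 + a2),
       0, L1 + (b2 - a2))))"

fun concat_list :: "arc list \<Rightarrow> arc" where
  "concat_list [] = undefined"
| "concat_list [A] = A"
| "concat_list (A # B # As) = concat_arc A (concat_list (B # As))"

definition piece :: "(real \<Rightarrow> complex) \<Rightarrow> (nat \<Rightarrow> real) \<Rightarrow> nat \<Rightarrow> arc" where
  "piece \<gamma> c i = (\<gamma>, \<lambda>t. sgn (velocity \<gamma> t), c (i - 1), c i)"

definition rearr :: "(real \<Rightarrow> complex) \<Rightarrow> nat \<Rightarrow> (nat \<Rightarrow> nat) \<Rightarrow> (nat \<Rightarrow> real) \<Rightarrow> arc" where
  "rearr \<gamma> k \<sigma> c = concat_list (map (\<lambda>j. piece \<gamma> c (\<sigma> j)) [1..<k+1])"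

definition closed_arc :: "arc \<Rightarrow> bool" where
  "closed_arc A = (case A of (p, d, a, b) \<Rightarrow> p 0 = p 1 \<and> d 0 = d 1)"

text \<open>C in D_k is encoded as c :: nat => real with c 0 = 0, c k = 1, monotone on 0..k.\<close>

definition in_Dk :: "nat \<Rightarrow> (nat \<Rightarrow> real) \<Rightarrow> bool" where
  "in_Dk k c \<longleftrightarrow> c 0 = 0 \<and> c k = 1 \<and> (\<forall>i<k. c i \<le> c (Suc i))"

definition rearrangeable :: "nat \<Rightarrow> (real \<Rightarrow> complex) \<Rightarrow> (nat \<Rightarrow> nat) \<Rightarrow> bool" where
  "rearrangeable k \<gamma> \<sigma> \<longleftrightarrow> (\<exists>c. in_Dk k c \<and> closed_arc (rearr \<gamma> k \<sigma> c))"

definition zrot :: "nat \<Rightarrow> nat \<Rightarrow> nat \<Rightarrow> nat" where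
  "zrot k h i = (if i \<le> k - h then i + h else i + h - k)"

end

theory Submission
  imports Defs
begin

text \<open>An arc whose unit tangent does not vanish at its end points determines the similarity
\<open>z \<mapsto> v + r z\<close> of the plane that carries its initial frame (start point and tangent) to its
final frame, written in coordinates attached to the initial frame. Concatenation composes these
maps, and a concatenation parametrised by [0,1] is a closed \<open>C\<^sup>1\<close> curve exactly when the composite
is the identity. The maps are injective, so \<open>f \<circ> g = id\<close> iff \<open>g \<circ> f = id\<close>: closedness is invariant
under cyclic rotation of the pieces, and precomposing \<open>\<sigma>\<close> with \<open>z\<^sub>h\<close> rotates them by \<open>h\<close>.\<close>

definition regular_arc :: "arc \<Rightarrow> bool" where
  "regular_arc A \<longleftrightarrow> (case A of (p, d, a, b) \<Rightarrow> a \<le> b \<and> d a \<noteq> 0 \<and> d b \<noteq> 0)"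

definition arc_span :: "arc \<Rightarrow> real" where
  "arc_span A = (case A of (p, d, a, b) \<Rightarrow> b - a)"

definition arc_motion :: "arc \<Rightarrow> complex \<Rightarrow> complex" where
  "arc_motion A = (case A of (p, d, a, b) \<Rightarrow> \<lambda>z. (p b - p a) / d a + d b / d a * z)"

lemma concat_arc_domain: "\<exists>P D. concat_arc A B = (P, D, 0, arc_span A + arc_span B)"
  by (simp add: concat_arc_def arc_span_def Let_def split: prod.split)

lemma arc_span_concat_arc: "arc_span (concat_arc A B) = arc_span A + arc_span B"
  using concat_arc_domain[of A B] by (auto simp: arc_span_def)

lemma regular_concat_arc_and_motion:
  assumes "regular_arc A" "regular_arc B"
  shows "regular_arc (concat_arc A B) \<and>
    arc_motion (concat_arc A B) = arc_motion A \<circ> arc_motion B"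
proof -
  obtain p1 d1 a1 b1 where A: "A = (p1, d1, a1, b1)" by (cases A) auto
  obtain p2 d2 a2 b2 where B: "B = (p2, d2, a2, b2)" by (cases B) auto
  have reg: "a1 \<le> b1" "d1 a1 \<noteq> 0" "d1 b1 \<noteq> 0" "a2 \<le> b2" "d2 a2 \<noteq> 0" "d2 b2 \<noteq> 0"
    using assms by (auto simp: A B regular_arc_def)
  define u where "u = d1 b1 / d2 a2"
  define L where "L = b1 - a1"
  define P where "P = (\<lambda>s. if s \<le> L then p1 (s + a1) else p1 b1 + u * (p2 (s - L + a2) - p2 a2))"
  define D where "D = (\<lambda>s. if s \<le> L then d1 (s + a1) else u * d2 (s - L + a2))"
  have concat: "concat_arc A B = (P, D, 0, L + (b2 - a2))"
    unfolding P_def D_def u_def L_def by (simp add: A B concat_arc_def Let_def)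
  have start: "P 0 = p1 a1" "D 0 = d1 a1"
    using reg by (auto simp: P_def D_def L_def)
  \<comment> \<open>if \<open>B\<close> is degenerate the end point falls into the first branch, where it agrees
      with the second one since \<open>u * d2 a2 = d1 b1\<close>\<close>
  have ends: "P (L + (b2 - a2)) = p1 b1 + u * (p2 b2 - p2 a2)" "D (L + (b2 - a2)) = u * d2 b2"
    using reg by (auto simp: P_def D_def L_def u_def)
  have "arc_motion (concat_arc A B)
      = (\<lambda>z. (p1 b1 + u * (p2 b2 - p2 a2) - p1 a1) / d1 a1 + u * d2 b2 / d1 a1 * z)"
    by (simp only: concat arc_motion_def prod.case ends start)
  also have "\<dots> = arc_motion A \<circ> arc_motion B"
    using reg by (auto simp: A B arc_motion_def u_def field_simps)
  finally have "arc_motion (concat_arc A B) = arc_motion A \<circ> arc_motion B" .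
  moreover have "regular_arc (concat_arc A B)"
    using reg unfolding concat regular_arc_def prod.case ends start by (simp add: L_def u_def)
  ultimately show ?thesis by blast
qed

lemma arc_span_concat_list:
  "xs \<noteq> [] \<Longrightarrow> arc_span (concat_list xs) = sum_list (map arc_span xs)"
  by (induction xs rule: concat_list.induct) (simp_all add: arc_span_concat_arc)

lemma concat_list_domain:
  assumes "length xs \<ge> 2"
  shows "\<exists>P D. concat_list xs = (P, D, 0, sum_list (map arc_span xs))"
proof -
  obtain A B As where "xs = A # B # As"
    using assms by (metis Suc_le_length_iff numeral_2_eq_2)
  then show ?thesis
    using concat_arc_domain[of A "concat_list (B # As)"] arc_span_concat_list[of "B # As"] by simp
qed

lemma regular_concat_list_and_motion:
  assumes "xs \<noteq> []" "\<forall>A\<in>set xs. regular_arc A"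
  shows "regular_arc (concat_list xs) \<and>
    arc_motion (concat_list xs) = foldr (\<circ>) (map arc_motion xs) id"
  using assms
  by (induction xs rule: concat_list.induct) (simp_all add: regular_concat_arc_and_motion)

lemma closed_arc_iff_motion_id:
  assumes "regular_arc (p, d, 0, 1)"
  shows "closed_arc (p, d, 0, 1) \<longleftrightarrow> arc_motion (p, d, 0, 1) = id"
proof
  assume "arc_motion (p, d, 0, 1) = id"
  then have "arc_motion (p, d, 0, 1) 0 = 0" "arc_motion (p, d, 0, 1) 1 = 1" by simp_all
  then show "closed_arc (p, d, 0, 1)"
    using assms by (simp add: arc_motion_def regular_arc_def closed_arc_def)
qed (use assms in \<open>auto simp: arc_motion_def regular_arc_def closed_arc_def\<close>)

lemma closed_concat_list_iff_motion_id:
  assumes "length xs \<ge> 2" "\<forall>A\<in>set xs. regular_arc A" "sum_list (map arc_span xs) = 1"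
  shows "closed_arc (concat_list xs) \<longleftrightarrow> foldr (\<circ>) (map arc_motion xs) id = id"
proof -
  obtain P D where concat: "concat_list xs = (P, D, 0, 1)"
    using concat_list_domain[OF assms(1)] assms(3) by auto
  have "xs \<noteq> []" using assms(1) by auto
  then show ?thesis
    using regular_concat_list_and_motion[OF _ assms(2)] closed_arc_iff_motion_id[of P D]
    by (simp add: concat)
qed

lemma inj_arc_motion: "regular_arc A \<Longrightarrow> inj (arc_motion A)"
  by (cases A) (auto simp: inj_def arc_motion_def regular_arc_def)

lemma comp_eq_id_swap:
  assumes "inj f" "inj g"
  shows "f \<circ> g = id \<longleftrightarrow> g \<circ> f = id"
proof -
  have swap: "g' \<circ> f' = id" if "inj f'" "f' \<circ> g' = id" for f' g'
  proof
    fix x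
    have "f' (g' (f' x)) = f' x" using \<open>f' \<circ> g' = id\<close> by (metis comp_apply id_apply)
    then show "(g' \<circ> f') x = id x" using \<open>inj f'\<close> by (simp add: inj_def)
  qed
  show ?thesis using swap[OF assms(1)] swap[OF assms(2)] by blast
qed

lemma inj_foldr_comp: "\<forall>f\<in>set fs. inj f \<Longrightarrow> inj (foldr (\<circ>) fs id)"
  by (induction fs) (simp_all add: inj_compose)

lemma foldr_comp_eq: "foldr (\<circ>) fs f = foldr (\<circ>) fs id \<circ> f"
  by (induction fs) (simp_all add: comp_assoc)

lemma foldr_comp_rotate1_eq_id:
  assumes "\<forall>f\<in>set fs. inj f"
  shows "foldr (\<circ>) (rotate1 fs) id = id \<longleftrightarrow> foldr (\<circ>) fs id = id"
proof (cases fs)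
  case (Cons g gs)
  have "foldr (\<circ>) (rotate1 fs) id = foldr (\<circ>) gs id \<circ> g"
    using foldr_comp_eq[of gs g] by (simp add: Cons)
  moreover have "foldr (\<circ>) fs id = g \<circ> foldr (\<circ>) gs id"
    by (simp add: Cons)
  ultimately show ?thesis
    using comp_eq_id_swap[of g "foldr (\<circ>) gs id"] inj_foldr_comp[of gs] assms by (simp add: Cons)
qed simp

lemma foldr_comp_rotate_eq_id:
  "\<forall>f\<in>set fs. inj f \<Longrightarrow> foldr (\<circ>) (rotate n fs) id = id \<longleftrightarrow> foldr (\<circ>) fs id = id"
  by (induction n) (simp_all add: foldr_comp_rotate1_eq_id)

lemma sum_list_rotate: "sum_list (rotate n xs) = sum_list (xs :: 'a :: comm_monoid_add list)"
proof -
  have "sum_list (rotate1 ys) = sum_list ys" for ys :: "'a list"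
    by (cases ys) (simp_all add: add.commute)
  then show ?thesis by (induction n) simp_all
qed

lemma closed_concat_list_rotate:
  assumes "\<forall>A\<in>set xs. regular_arc A" "sum_list (map arc_span xs) = 1"
  shows "closed_arc (concat_list (rotate n xs)) \<longleftrightarrow> closed_arc (concat_list xs)"
proof (cases "length xs \<ge> 2")
  case True
  have "\<forall>f\<in>set (map arc_motion xs). inj f" using assms(1) by (auto intro: inj_arc_motion)
  then show ?thesis
    using closed_concat_list_iff_motion_id[of xs] closed_concat_list_iff_motion_id[of "rotate n xs"]
      foldr_comp_rotate_eq_id[of "map arc_motion xs" n] True assms
    by (simp add: rotate_map[symmetric] sum_list_rotate)
qed simp

lemma zrot_eq_mod: "h < k \<Longrightarrow> i \<in> {1..k} \<Longrightarrow> zrot k h i = (i - 1 + h) mod k + 1"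
  by (auto simp: zrot_def mod_if)

lemma map_zrot_upt: "h < k \<Longrightarrow> map (zrot k h) [1..<k+1] = rotate h [1..<k+1]"
  by (rule nth_equalityI) (simp_all add: nth_rotate zrot_eq_mod add.commute del: upt_Suc)

lemma rearr_comp_zrot:
  assumes "h < k"
  shows "rearr \<gamma> k (\<sigma> \<circ> zrot k h) c
    = concat_list (rotate h (map (\<lambda>j. piece \<gamma> c (\<sigma> j)) [1..<k+1]))"
proof -
  have "map (\<lambda>j. piece \<gamma> c ((\<sigma> \<circ> zrot k h) j)) [1..<k+1]
      = map (\<lambda>j. piece \<gamma> c (\<sigma> j)) (map (zrot k h) [1..<k+1])"
    by simp
  then show ?thesis
    unfolding rearr_def map_zrot_upt[OF assms] by (simp only: rotate_map)
qed

lemma in_Dk_mono: "in_Dk k c \<Longrightarrow> i \<le> j \<Longrightarrow> j \<le> k \<Longrightarrow> c i \<le> c j"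
  unfolding in_Dk_def by (rule lift_Suc_mono_le_ivl[where N = "{..<k}"]) auto

lemma regular_piece:
  assumes "in_Dk k c" "i \<in> {1..k}" "\<forall>t\<in>{0..1}. velocity \<gamma> t \<noteq> 0"
  shows "regular_arc (piece \<gamma> c i)"
proof -
  have "c 0 \<le> c (i - 1)" "c (i - 1) \<le> c i" "c i \<le> c k"
    using in_Dk_mono[OF assms(1)] assms(2) by auto
  then show ?thesis
    using assms by (auto simp: piece_def regular_arc_def in_Dk_def sgn_zero_iff)
qed

lemma regular_pieces:
  assumes "\<sigma> permutes {1..k}" "in_Dk k c" "\<forall>t\<in>{0..1}. velocity \<gamma> t \<noteq> 0"
  shows "\<forall>A\<in>set (map (\<lambda>j. piece \<gamma> c (\<sigma> j)) [1..<k+1]). regular_arc A"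
proof
  fix A assume "A \<in> set (map (\<lambda>j. piece \<gamma> c (\<sigma> j)) [1..<k+1])"
  then obtain j where "j \<in> {1..k}" "A = piece \<gamma> c (\<sigma> j)"
    by (force simp: less_Suc_eq_le simp del: upt_Suc)
  then show "regular_arc A"
    using regular_piece[OF assms(2) _ assms(3)] permutes_in_image[OF assms(1)] by simp
qed

lemma sum_arc_span_pieces:
  assumes "\<sigma> permutes {1..k}" "in_Dk k c"
  shows "sum_list (map (\<lambda>j. arc_span (piece \<gamma> c (\<sigma> j))) [1..<k+1]) = 1"
proof -
  have "sum_list (map (\<lambda>j. arc_span (piece \<gamma> c (\<sigma> j))) [1..<k+1])
      = (\<Sum>j\<in>{1..k}. c (\<sigma> j) - c (\<sigma> j - 1))"
    by (simp add: sum_list_distinct_conv_sum_set atLeastLessThanSuc_atLeastAtMost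
        piece_def arc_span_def del: upt_Suc)
  also have "\<dots> = (\<Sum>i\<in>{1..k}. c i - c (i - 1))"
    using sum.permute[OF assms(1), of "\<lambda>i. c i - c (i - 1)"] by simp
  also have "\<dots> = c k - c 0"
    by (induction k) simp_all
  also have "\<dots> = 1"
    using assms(2) by (simp add: in_Dk_def)
  finally show ?thesis .
qed

theorem lemma4p3:
  fixes \<gamma> :: "real \<Rightarrow> complex" and \<theta> :: "real \<Rightarrow> real" and c :: real
    and m :: int and k h :: nat and \<sigma> :: "nat \<Rightarrow> nat"
  assumes "C1_curve \<gamma>"
    and "c > 0"
    and "\<forall>t\<in>{0..1}. norm (velocity \<gamma> t) = c"
    and "\<gamma> 0 \<noteq> \<gamma> 1"
    and "continuous_on {0..1} \<theta>"
    and "\<forall>t\<in>{0..1}. velocity \<gamma> t = complex_of_real c * cis (\<theta> t)"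
    and "\<theta> 1 - \<theta> 0 = 2 * pi * of_int m"
    and "m \<noteq> 0"
    and "\<sigma> permutes {1..k}"
    and "h < k"
  shows "rearrangeable k \<gamma> \<sigma> \<longleftrightarrow> rearrangeable k \<gamma> (\<sigma> \<circ> zrot k h)"
proof -
  have regular_velocity: "\<forall>t\<in>{0..1}. velocity \<gamma> t \<noteq> 0"
    using assms(2,3) by force
  have "closed_arc (rearr \<gamma> k (\<sigma> \<circ> zrot k h) C) \<longleftrightarrow> closed_arc (rearr \<gamma> k \<sigma> C)"
    if "in_Dk k C" for C
  proof -
    define pieces where "pieces = map (\<lambda>j. piece \<gamma> C (\<sigma> j)) [1..<k+1]"
    have "\<forall>A\<in>set pieces. regular_arc A"
      using regular_pieces[OF assms(9) that regular_velocity] by (simp add: pieces_def)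
    moreover have "sum_list (map arc_span pieces) = 1"
      using sum_arc_span_pieces[OF assms(9) that] by (simp add: pieces_def comp_def)
    ultimately have "closed_arc (concat_list (rotate h pieces)) \<longleftrightarrow> closed_arc (concat_list pieces)"
      by (rule closed_concat_list_rotate)
    then show ?thesis
      unfolding rearr_comp_zrot[OF assms(10)] unfolding rearr_def pieces_def .
  qed
  then show ?thesis unfolding rearrangeable_def by blast
qed

end
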